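(* Let $\mathcal{X}$ be a finite set, $\phi\notin\mathcal{X}$, $L,T\in\mathbb{N}$, positions $i_0,\dots,i_{T-1}\in\{0,\dots,L-1\}$ fixed, and $\Pi_t$ ($t=0,\dots,T-1$) probability distributions on $\mathcal{X}\cup\{\phi\}$. Let $X_0\sim P^*$ on $\mathcal{X}^L$, let $Z_0,\dots,Z_{T-1}$ be independent, independent of $X_0$, with $Z_t\sim\Pi_t$, and define the forward process by $X_{t+1,j}=X_{t,j}$ for $j\ne i_t$, $X_{t+1,i_t}=X_{t,i_t}$ if $Z_t=\phi$, and $X_{t+1,i_t}=Z_t$ if $Z_t\in\mathcal{X}$. Then for any $t\in\{0,\dots,T-1\}$, any $x\in\mathcal{X}^L$ and any $a\in\mathcal{X}$ (for which the quantities below are well defined, i.e. $\mathbb{P}(Z_t=\phi)>0$ and the conditioning events and the denominator are nonzero), $$\mathbb{P}\big(X_{t,i_t}=a\mid X_{t+1,-i_t}=x_{-i_t}\big)=\frac{\mathbb{P}(Z_t=a)}{\mathbb{P}(Z_t=\phi)}\left(\frac{1}{\mathbb{P}\big(Z_t=a\mid X_{t+1,-i_t}=x_{-i_t},\,X_{t+1,i_t}=a\big)}-1\right).$$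
   Context: For $x\in\mathcal{X}^L$ and $i\in\{0,\dots,L-1\}$, $x_i$ is the $i$-th coordinate and $x_{-i}\in\mathcal{X}^{L-1}$ is the sequence obtained by deleting the $i$-th coordinate. *)

theory Defs
  imports "HOL-Probability.Probability"
begin

definition del_at :: "nat \<Rightarrow> 'a list \<Rightarrow> 'a list" where
  "del_at i xs = take i xs @ drop (Suc i) xs"

text \<open>Forward process. The symbol phi is represented by None; z t is the noise Z_t.\<close>
fun fwd :: "(nat \<Rightarrow> nat) \<Rightarrow> 'x list \<Rightarrow> (nat \<Rightarrow> 'x option) \<Rightarrow> nat \<Rightarrow> 'x list" where
  "fwd i x0 z 0 = x0"
| "fwd i x0 z (Suc t) =
     (case z t of None \<Rightarrow> fwd i x0 z t | Some a \<Rightarrow> (fwd i x0 z t)[i t := a])"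

definition sample_pmf ::
  "'x list pmf \<Rightarrow> (nat \<Rightarrow> 'x option pmf) \<Rightarrow> nat \<Rightarrow> ('x list \<times> (nat \<Rightarrow> 'x option)) pmf" where
  "sample_pmf P0 Pd T = pair_pmf P0 (Pi_pmf {..<T} None Pd)"

definition cprob :: "'a pmf \<Rightarrow> 'a set \<Rightarrow> 'a set \<Rightarrow> real" where
  "cprob M A B = measure_pmf.prob M (A \<inter> B) / measure_pmf.prob M B"

end

theory Submission
  imports Defs
begin

text \<open>
  Write k = i_t. The noise Z_t is independent of the state X_t, and applying it never changes
  the coordinates other than k. With q = P(X_t,-k = x_-k) and p = P(X_t,-k = x_-k, X_t,k = a),
  the left-hand side is p / q, while X_t+1 = (x_-k, a) has probability Pi(phi) p + Pi(a) q,
  of which Pi(a) q comes from Z_t = a. Solving for p / q gives the identity.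
\<close>

definition apply_noise :: "nat \<Rightarrow> 'x option \<Rightarrow> 'x list \<Rightarrow> 'x list" where
  "apply_noise k y xs = (case y of None \<Rightarrow> xs | Some b \<Rightarrow> xs[k := b])"

lemma fwd_Suc_apply_noise: "fwd i x0 z (Suc t) = apply_noise (i t) (z t) (fwd i x0 z t)"
  by (simp add: apply_noise_def)

lemma length_fwd: "length (fwd i x0 z t) = length x0"
  by (induction t) (auto split: option.splits)

lemma fwd_cong: "(\<And>s. s < t \<Longrightarrow> z s = z' s) \<Longrightarrow> fwd i x0 z t = fwd i x0 z' t"
  by (induction t) (auto split: option.splits)

lemma del_at_list_update: "k < length xs \<Longrightarrow> del_at k (xs[k := b]) = del_at k xs"
  by (simp add: del_at_def)

lemma del_at_apply_noise: "k < length xs \<Longrightarrow> del_at k (apply_noise k y xs) = del_at k xs"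
  by (simp add: apply_noise_def del_at_list_update split: option.split)

lemma nth_apply_noise:
  "k < length xs \<Longrightarrow> apply_noise k y xs ! k = (case y of None \<Rightarrow> xs ! k | Some b \<Rightarrow> b)"
  by (simp add: apply_noise_def split: option.split)

lemma measure_pmf_cong_support:
  assumes "\<And>\<omega>. \<omega> \<in> set_pmf M \<Longrightarrow> \<omega> \<in> A \<longleftrightarrow> \<omega> \<in> B"
  shows "measure_pmf.prob M A = measure_pmf.prob M B"
  using assms by (intro measure_prob_cong_0) (auto simp: set_pmf_eq)

lemma cprob_map_pmf: "cprob (map_pmf f M) A B = cprob M (f -` A) (f -` B)"
  by (simp add: cprob_def vimage_Int)

lemma sample_pmf_split_noise:
  assumes "t < T"
  shows "sample_pmf P0 Pd T =
    map_pmf (\<lambda>(y, (x0, f)). (x0, f(t := y)))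
      (pair_pmf (Pd t) (pair_pmf P0 (Pi_pmf ({..<T} - {t}) None Pd)))"
proof -
  have "{..<T} = insert t ({..<T} - {t})"
    using assms by auto
  then have "Pi_pmf {..<T} None Pd =
      map_pmf (\<lambda>(y, f). f(t := y)) (pair_pmf (Pd t) (Pi_pmf ({..<T} - {t}) None Pd))"
    by (metis Diff_iff Pi_pmf_insert finite_Diff finite_lessThan singletonI)
  then show ?thesis
    unfolding sample_pmf_def
    by (simp add: pair_pmf_def map_pmf_def bind_assoc_pmf bind_return_pmf) (rule bind_commute_pmf)
qed

lemma noise_independent_of_state:
  assumes "t < T"
  shows "map_pmf (\<lambda>\<omega>. (snd \<omega> t, fwd i (fst \<omega>) (snd \<omega>) t)) (sample_pmf P0 Pd T) =
    pair_pmf (Pd t) (map_pmf (\<lambda>\<omega>. fwd i (fst \<omega>) (snd \<omega>) t) (sample_pmf P0 Pd T))"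
proof -
  define R where "R = pair_pmf P0 (Pi_pmf ({..<T} - {t}) None Pd)"
  have fwd_upd: "fwd i x0 (f(t := y)) t = fwd i x0 f t" for x0 f y
    by (rule fwd_cong) simp
  have joint: "map_pmf (\<lambda>\<omega>. (snd \<omega> t, fwd i (fst \<omega>) (snd \<omega>) t)) (sample_pmf P0 Pd T) =
      pair_pmf (Pd t) (map_pmf (\<lambda>(x0, f). fwd i x0 f t) R)"
    unfolding sample_pmf_split_noise[OF assms] R_def pmf.map_comp
    using map_pair[of id "\<lambda>(x0, f). fwd i x0 f t" "Pd t"]
    by (simp add: o_def case_prod_unfold fwd_upd)
  have "map_pmf (\<lambda>\<omega>. fwd i (fst \<omega>) (snd \<omega>) t) (sample_pmf P0 Pd T) =
      map_pmf snd (map_pmf (\<lambda>\<omega>. (snd \<omega> t, fwd i (fst \<omega>) (snd \<omega>) t)) (sample_pmf P0 Pd T))"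
    by (simp add: pmf.map_comp o_def)
  then show ?thesis
    unfolding joint map_snd_pair_pmf by simp
qed

lemma measure_pair_pmf_noise_events:
  fixes D :: "'x::countable option pmf" and V :: "'x list pmf"
    and k :: nat and x :: "'x list" and a :: 'x
  assumes len: "\<forall>Y \<in> set_pmf V. k < length Y"
  defines "E \<equiv> {(y, Y). del_at k (apply_noise k y Y) = del_at k x}"
    and "F \<equiv> {(y, Y). apply_noise k y Y ! k = a}"
    and "Q \<equiv> {Y. del_at k Y = del_at k x}"
    and "A \<equiv> {Y. Y ! k = a}"
  shows "measure (pair_pmf D V) E = measure V Q"
    and "measure (pair_pmf D V) ({(y, Y). Y ! k = a} \<inter> E) = measure V (Q \<inter> A)"
    and "measure (pair_pmf D V) (E \<inter> F) =
      pmf D None * measure V (Q \<inter> A) + pmf D (Some a) * measure V Q"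
    and "measure (pair_pmf D V) ({(y, Y). y = Some a} \<inter> (E \<inter> F)) =
      pmf D (Some a) * measure V Q"
proof -
  have on_support: "measure (pair_pmf D V) S = measure (pair_pmf D V) S'"
    if "\<And>y Y. k < length Y \<Longrightarrow> (y, Y) \<in> S \<longleftrightarrow> (y, Y) \<in> S'" for S S'
    using len that by (intro measure_pmf_cong_support) auto
  have product: "measure (pair_pmf D V) (B \<times> C) = measure D B * measure V C" for B C
    by (rule measure_pmf_prob_product) simp_all
  show "measure (pair_pmf D V) E = measure V Q"
    using on_support[of E "UNIV \<times> Q"] product[of UNIV Q]
    by (simp add: E_def Q_def del_at_apply_noise)
  show "measure (pair_pmf D V) ({(y, Y). Y ! k = a} \<inter> E) = measure V (Q \<inter> A)"
    using on_support[of "{(y, Y). Y ! k = a} \<inter> E" "UNIV \<times> (Q \<inter> A)"] product[of UNIV "Q \<inter> A"]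
    by (simp add: E_def Q_def A_def del_at_apply_noise conj_commute)
  have "measure (pair_pmf D V) ({(y, Y). y = Some a} \<inter> (E \<inter> F)) =
      measure (pair_pmf D V) ({Some a} \<times> Q)"
    by (rule on_support) (auto simp: E_def F_def Q_def del_at_apply_noise nth_apply_noise)
  then show "measure (pair_pmf D V) ({(y, Y). y = Some a} \<inter> (E \<inter> F)) =
      pmf D (Some a) * measure V Q"
    by (simp only: product measure_pmf_single)
  have "measure (pair_pmf D V) (E \<inter> F) =
      measure (pair_pmf D V) ({None} \<times> (Q \<inter> A) \<union> {Some a} \<times> Q)"
    by (rule on_support)
      (auto simp: E_def F_def Q_def A_def del_at_apply_noise nth_apply_noise split: option.splits)
  also have "\<dots> =
      measure (pair_pmf D V) ({None} \<times> (Q \<inter> A)) + measure (pair_pmf D V) ({Some a} \<times> Q)"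
    by (rule measure_pmf.finite_measure_Union) auto
  finally show "measure (pair_pmf D V) (E \<inter> F) =
      pmf D None * measure V (Q \<inter> A) + pmf D (Some a) * measure V Q"
    by (simp add: product measure_pmf_single)
qed

lemma posterior_one_step:
  fixes D :: "'x::countable option pmf" and V :: "'x list pmf"
    and k :: nat and x :: "'x list" and a :: 'x
  assumes len: "\<forall>Y \<in> set_pmf V. k < length Y"
  defines "J \<equiv> pair_pmf D V"
    and "E \<equiv> {(y, Y). del_at k (apply_noise k y Y) = del_at k x}"
    and "F \<equiv> {(y, Y). apply_noise k y Y ! k = a}"
  assumes phi_pos: "pmf D None > 0"
    and den_nz: "cprob J {(y, Y). y = Some a} (E \<inter> F) \<noteq> 0"
  shows "cprob J {(y, Y). Y ! k = a} E =
    pmf D (Some a) / pmf D None * (1 / cprob J {(y, Y). y = Some a} (E \<inter> F) - 1)"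
proof -
  define q where "q = measure V {Y. del_at k Y = del_at k x}"
  define p where "p = measure V ({Y. del_at k Y = del_at k x} \<inter> {Y. Y ! k = a})"
  have events:
    "measure J E = q"
    "measure J ({(y, Y). Y ! k = a} \<inter> E) = p"
    "measure J (E \<inter> F) = pmf D None * p + pmf D (Some a) * q"
    "measure J ({(y, Y). y = Some a} \<inter> (E \<inter> F)) = pmf D (Some a) * q"
    unfolding J_def E_def F_def p_def q_def by (rule measure_pair_pmf_noise_events[OF len])+
  have "pmf D (Some a) * q \<noteq> 0" "pmf D None * p + pmf D (Some a) * q \<noteq> 0"
    using den_nz by (auto simp: cprob_def events)
  then show ?thesis
    using phi_pos by (simp add: cprob_def events field_simps)
qed

theorem lemma3:
  fixes P0 :: "'x::finite list pmf" and Pd :: "nat \<Rightarrow> 'x option pmf"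
    and i :: "nat \<Rightarrow> nat" and L T t :: nat and x :: "'x list" and a :: 'x
    and M :: "('x list \<times> (nat \<Rightarrow> 'x option)) pmf"
    and E F :: "('x list \<times> (nat \<Rightarrow> 'x option)) set"
  assumes P0_len: "\<forall>xs \<in> set_pmf P0. length xs = L"
    and i_range: "\<forall>s<T. i s < L"
    and t_lt: "t < T"
    and x_len: "length x = L"
  defines "M \<equiv> sample_pmf P0 Pd T"
    and "E \<equiv> {\<omega>. del_at (i t) (fwd i (fst \<omega>) (snd \<omega>) (Suc t)) = del_at (i t) x}"
    and "F \<equiv> {\<omega>. fwd i (fst \<omega>) (snd \<omega>) (Suc t) ! i t = a}"
  assumes phi_pos: "pmf (Pd t) None > 0"
    and E_pos: "measure_pmf.prob M E > 0"
    and EF_pos: "measure_pmf.prob M (E \<inter> F) > 0"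
    and den_nz: "cprob M {\<omega>. snd \<omega> t = Some a} (E \<inter> F) \<noteq> 0"
  shows "cprob M {\<omega>. fwd i (fst \<omega>) (snd \<omega>) t ! i t = a} E =
           pmf (Pd t) (Some a) / pmf (Pd t) None *
           (1 / cprob M {\<omega>. snd \<omega> t = Some a} (E \<inter> F) - 1)"
proof -
  define state :: "'x list \<times> (nat \<Rightarrow> 'x option) \<Rightarrow> 'x option \<times> 'x list"
    where "state \<omega> = (snd \<omega> t, fwd i (fst \<omega>) (snd \<omega>) t)" for \<omega>
  define V where "V = map_pmf (\<lambda>\<omega>. fwd i (fst \<omega>) (snd \<omega>) t) M"
  have joint: "map_pmf state M = pair_pmf (Pd t) V"
    unfolding state_def V_def M_def by (rule noise_independent_of_state[OF t_lt])
  have len: "\<forall>Y \<in> set_pmf V. i t < length Y"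
    using P0_len i_range t_lt by (auto simp: V_def M_def sample_pmf_def length_fwd)
  let ?E = "{(y, Y). del_at (i t) (apply_noise (i t) y Y) = del_at (i t) x}"
  let ?F = "{(y, Y). apply_noise (i t) y Y ! i t = a}"
  have preimages: "E = state -` ?E" "F = state -` ?F"
    "{\<omega>. fwd i (fst \<omega>) (snd \<omega>) t ! i t = a} = state -` {(y, Y). Y ! i t = a}"
    "{\<omega>. snd \<omega> t = Some a} = state -` {(y, Y). y = Some a}"
    unfolding E_def F_def fwd_Suc_apply_noise by (auto simp: state_def)
  have "cprob M {\<omega>. fwd i (fst \<omega>) (snd \<omega>) t ! i t = a} E =
      cprob (pair_pmf (Pd t) V) {(y, Y). Y ! i t = a} ?E"
    and "cprob M {\<omega>. snd \<omega> t = Some a} (E \<inter> F) =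
      cprob (pair_pmf (Pd t) V) {(y, Y). y = Some a} (?E \<inter> ?F)"
    by (simp_all only: preimages cprob_map_pmf vimage_Int flip: joint)
  with posterior_one_step[OF len phi_pos] den_nz show ?thesis
    by simp
qed

end
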